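(* Let $W$ be a finite Weyl group with root system $R\subset V$, let $U\subseteq V$ be a subspace with orthogonal complement $U^\perp$, let $w\in W$, and let $X=\bigcap_{\alpha\in I(w)\cap R_U}\ker\alpha$ (so $U^\perp\subseteq X$). Then the inversion arrangement $\mathcal{I}(\mathrm{fl}_U(w))$ (an arrangement in $U$) is equal to the quotient $\mathcal{I}(w)_X/U^\perp$ of the localization $\mathcal{I}(w)_X$, under the identification $V/U^\perp\cong U$.
   Context: $R^+$, $R^-$ are the positive and negative roots; $I(w)=\{\alpha\in R^+:w^{-1}\alpha\in R^-\}$; $\mathcal{I}(w)$ is the arrangement of hyperplanes $\ker\alpha$, $\alpha\in I(w)$. $R_U=R\cap U$ is a root system in $U$ with positive roots $R^+\cap U$ and Weyl group $W_U$; $\mathrm{fl}_U(w)$ is the unique element of $W_U$ whose inversion set in $R_U$ is $I(w)\cap U$, and $\mathcal{I}(\mathrm{fl}_U(w))$ is the arrangement in $U$ of the hyperplanes $\{x\in U:(x,\alpha)=0\}$, $\alpha\in I(w)\cap U$. For a flat $X$ of an arrangement $\mathcal{A}$, the localization $\mathcal{A}_X$ consists of the hyperplanes containing $X$; for a subspace $Y$ of the center, $\mathcal{A}/Y$ is the arrangement $\{H/Y\}$ in $V/Y$. *)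

theory Defs
  imports "HOL-Analysis.Analysis"
begin

definition refl_vec :: "'a::euclidean_space \<Rightarrow> 'a \<Rightarrow> 'a" where
  "refl_vec a x = x - (2 * (x \<bullet> a) / (a \<bullet> a)) *\<^sub>R a"

definition root_system :: "'a::euclidean_space set \<Rightarrow> bool" where
  "root_system R \<longleftrightarrow> finite R \<and> 0 \<notin> R
     \<and> (\<forall>a\<in>R. refl_vec a ` R = R)
     \<and> (\<forall>a\<in>R. \<forall>b\<in>R. 2 * (b \<bullet> a) / (a \<bullet> a) \<in> \<int>)
     \<and> (\<forall>a\<in>R. \<forall>c::real. c *\<^sub>R a \<in> R \<longrightarrow> c = 1 \<or> c = -1)"

text \<open>The Weyl group: the group generated by the reflections s_a, a in R
  (as R is finite, W is finite and the generated monoid is the generated group).\<close>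
inductive_set weyl_group :: "'a::euclidean_space set \<Rightarrow> ('a \<Rightarrow> 'a) set"
  for R where
    weyl_id: "id \<in> weyl_group R"
  | weyl_step: "w \<in> weyl_group R \<Longrightarrow> a \<in> R \<Longrightarrow> refl_vec a \<circ> w \<in> weyl_group R"

text \<open>Positive system: determined by a vector rho not orthogonal to any root.\<close>
definition pos_roots :: "'a::euclidean_space set \<Rightarrow> 'a \<Rightarrow> 'a set" where
  "pos_roots R rho = {a\<in>R. a \<bullet> rho > 0}"

definition neg_roots :: "'a::euclidean_space set \<Rightarrow> 'a \<Rightarrow> 'a set" where
  "neg_roots R rho = {a\<in>R. a \<bullet> rho < 0}"

definition inv_set :: "'a::euclidean_space set \<Rightarrow> 'a \<Rightarrow> ('a \<Rightarrow> 'a) \<Rightarrow> 'a set" where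
  "inv_set R rho w = {a \<in> pos_roots R rho. inv w a \<in> neg_roots R rho}"

text \<open>Hyperplane ker a (roots identified with linear forms via the inner product).\<close>
definition hyp :: "'a::euclidean_space \<Rightarrow> 'a set" where
  "hyp a = {x. x \<bullet> a = 0}"

definition inv_arr :: "'a::euclidean_space set \<Rightarrow> 'a \<Rightarrow> ('a \<Rightarrow> 'a) \<Rightarrow> 'a set set" where
  "inv_arr R rho w = hyp ` inv_set R rho w"

text \<open>I(fl_U(w)): arrangement in U of the hyperplanes {x in U. (x,a)=0}, a in I(w) \<inter> U
  (the inversion set of fl_U(w) in R_U is I(w) \<inter> U by definition of fl_U).\<close>
definition inv_arr_fl :: "'a::euclidean_space set \<Rightarrow> 'a \<Rightarrow> 'a set \<Rightarrow> ('a \<Rightarrow> 'a) \<Rightarrow> 'a set set" where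
  "inv_arr_fl R rho U w = (\<lambda>a. {x\<in>U. x \<bullet> a = 0}) ` (inv_set R rho w \<inter> U)"

definition localization :: "'a set set \<Rightarrow> 'a set \<Rightarrow> 'a set set" where
  "localization A X = {H \<in> A. X \<subseteq> H}"

definition orth_compl :: "'a::euclidean_space set \<Rightarrow> 'a set" where
  "orth_compl U = {x. \<forall>u\<in>U. x \<bullet> u = 0}"

definition orth_proj :: "'a::euclidean_space set \<Rightarrow> 'a \<Rightarrow> 'a" where
  "orth_proj U x = (THE u. u \<in> U \<and> x - u \<in> orth_compl U)"

text \<open>Quotient A/U^perp, transported to U along the identification V/U^perp \<cong> U
  induced by the orthogonal projection: H/U^perp corresponds to proj_U(H).\<close>
definition quot_arr_U :: "'a::euclidean_space set \<Rightarrow> 'a set set \<Rightarrow> 'a set set" where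
  "quot_arr_U U A = (\<lambda>H. orth_proj U ` H) ` A"

end

theory Submission
  imports Defs
begin

text \<open>A hyperplane ker b contains X, the intersection of the ker a with a in I(w) \<inter> U,
  exactly when b lies in the span of I(w) \<inter> U, hence in U; so the localization at X consists
  of the hyperplanes ker a with a in I(w) \<inter> U. For a in U the orthogonal projection maps ker a
  onto {x \<in> U. (x, a) = 0}, the hyperplane of I(fl_U(w)) attached to a. No property of root
  systems is used, which is why the root-system hypotheses of the theorem stay idle.\<close>

lemma orth_proj_unique:
  fixes U :: "'a::euclidean_space set"
  assumes U: "subspace U" and u: "u \<in> U" "x - u \<in> orth_compl U"
  shows "orth_proj U x = u"
  unfolding orth_proj_def
proof (rule the_equality)
  fix v assume v: "v \<in> U \<and> x - v \<in> orth_compl U"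
  have "v - u \<in> U" using U u v by (simp add: subspace_diff)
  then have "(x - u) \<bullet> (v - u) = 0" "(x - v) \<bullet> (v - u) = 0"
    using u v by (auto simp: orth_compl_def)
  then have "(v - u) \<bullet> (v - u) = 0"
    by (simp add: inner_diff_left)
  then show "v = u" by simp
qed (use u in blast)

lemma orth_proj:
  fixes U :: "'a::euclidean_space set"
  assumes U: "subspace U"
  shows "orth_proj U x \<in> U" "x - orth_proj U x \<in> orth_compl U"
proof -
  obtain y z where y: "y \<in> span U" and z: "\<And>v. v \<in> span U \<Longrightarrow> orthogonal z v"
    and x: "x = y + z"
    using orthogonal_subspace_decomp_exists by metis
  have "y \<in> U" using y U by (metis span_eq_iff)
  moreover have "x - y \<in> orth_compl U"
    using z x span_base by (auto simp: orth_compl_def orthogonal_def)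
  ultimately show "orth_proj U x \<in> U" "x - orth_proj U x \<in> orth_compl U"
    using orth_proj_unique[OF U] by auto
qed

lemma orth_proj_id:
  fixes U :: "'a::euclidean_space set"
  assumes "subspace U" "u \<in> U"
  shows "orth_proj U u = u"
  using assms by (intro orth_proj_unique) (auto simp: orth_compl_def)

lemma orth_proj_image_hyp:
  fixes U :: "'a::euclidean_space set"
  assumes U: "subspace U" and a: "a \<in> U"
  shows "orth_proj U ` hyp a = {x \<in> U. x \<bullet> a = 0}"
proof
  show "orth_proj U ` hyp a \<subseteq> {x \<in> U. x \<bullet> a = 0}"
  proof (rule image_subsetI)
    fix x assume "x \<in> hyp a"
    moreover have "(x - orth_proj U x) \<bullet> a = 0"
      using orth_proj(2)[OF U, of x] a by (simp add: orth_compl_def)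
    ultimately show "orth_proj U x \<in> {x \<in> U. x \<bullet> a = 0}"
      using orth_proj(1)[OF U] by (auto simp: hyp_def inner_diff_left)
  qed
  show "{x \<in> U. x \<bullet> a = 0} \<subseteq> orth_proj U ` hyp a"
    using orth_proj_id[OF U] by (auto simp: hyp_def intro: rev_image_eqI)
qed

lemma quot_arr_U_hyp_image:
  fixes U :: "'a::euclidean_space set"
  assumes "subspace U" "T \<subseteq> U"
  shows "quot_arr_U U (hyp ` T) = (\<lambda>a. {x \<in> U. x \<bullet> a = 0}) ` T"
  unfolding quot_arr_U_def image_image
  using assms by (intro image_cong) (auto simp: orth_proj_image_hyp subset_iff)

lemma in_span_if_Inter_hyp_subset:
  fixes S :: "'a::euclidean_space set"
  assumes "(\<Inter>a\<in>S. hyp a) \<subseteq> hyp b"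
  shows "b \<in> span S"
proof -
  obtain y z where y: "y \<in> span S" and z: "\<And>v. v \<in> span S \<Longrightarrow> orthogonal z v"
    and b: "b = y + z"
    using orthogonal_subspace_decomp_exists by metis
  have "z \<in> (\<Inter>a\<in>S. hyp a)"
    using z span_base by (auto simp: hyp_def orthogonal_def inner_commute)
  then have "z \<bullet> b = 0" using assms by (auto simp: hyp_def inner_commute)
  moreover have "z \<bullet> y = 0" using z y by (simp add: orthogonal_def)
  ultimately have "z \<bullet> z = 0" using b by (simp add: inner_add_right)
  then show ?thesis using b y by simp
qed

lemma localization_hyp_image:
  fixes U :: "'a::euclidean_space set"
  assumes "subspace U"
  shows "localization (hyp ` S) (\<Inter>a\<in>S \<inter> U. hyp a) = hyp ` (S \<inter> U)"
proof -
  have "b \<in> U" if "(\<Inter>a\<in>S \<inter> U. hyp a) \<subseteq> hyp b" for b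
    using in_span_if_Inter_hyp_subset[OF that] span_minimal[of "S \<inter> U" U] assms by blast
  then show ?thesis by (auto simp: localization_def)
qed

theorem mainTheorem12:
  fixes R :: "'a::euclidean_space set" and rho :: 'a and U :: "'a set"
    and w :: "'a \<Rightarrow> 'a" and X :: "'a set"
  assumes "root_system R"
    and "\<forall>a\<in>R. a \<bullet> rho \<noteq> 0"
    and "subspace U"
    and "w \<in> weyl_group R"
    and "X = (\<Inter>a\<in>inv_set R rho w \<inter> U. hyp a)"
  shows "inv_arr_fl R rho U w = quot_arr_U U (localization (inv_arr R rho w) X)"
  unfolding assms(5) inv_arr_def inv_arr_fl_def localization_hyp_image[OF assms(3)]
  by (simp add: quot_arr_U_hyp_image[OF assms(3)])

end
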